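(* Let $0<\eta<1$, $I=[\eta,1]$, and $\mathcal{D}$ as in the context. For every $s\in(0,1)$ and every $k\ge0$, the function $x\mapsto (x^s+k)^{-1}$ on $I$ belongs to $\mathscr{L}_1(\mathcal{D})$.
   Context: Dictionary: for $b\in(0,\infty)$ let $g(x,b)=\frac{\eta+b}{x+b}$ on $I$, and $\mathcal{D}=\{g(\cdot,b):b\in(0,\infty)\}\subset L^\infty(I)$. $B_1(\mathcal{D})$ is the closure in $L^\infty(I)$ of $\{\sum_{j=1}^m c_jg_j: m\in\mathbb{N}, g_j\in\mathcal{D}, \sum_j|c_j|\le1\}$; $\|f\|_{\mathscr{L}_1(\mathcal{D})}=\inf\{c>0: f\in cB_1(\mathcal{D})\}$; $\mathscr{L}_1(\mathcal{D})=\{f:\|f\|_{\mathscr{L}_1(\mathcal{D})}<\infty\}$. *)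

theory Defs
  imports "HOL-Analysis.Analysis"
begin

definition Ival :: "real \<Rightarrow> real set" where
  "Ival \<eta> = {\<eta>..1}"

definition gdict :: "real \<Rightarrow> real \<Rightarrow> real \<Rightarrow> real" where
  "gdict \<eta> b x = (\<eta> + b) / (x + b)"

text \<open>B_1(D): closure, in the uniform (L-infinity) norm on I, of the finite
  combinations sum c_j g(.,b_j) with b_j > 0 and sum |c_j| <= 1.\<close>
definition B1 :: "real \<Rightarrow> (real \<Rightarrow> real) set" where
  "B1 \<eta> = {f. \<forall>\<epsilon>>0. \<exists>m::nat. \<exists>c b :: nat \<Rightarrow> real.
      (\<forall>j<m. b j > 0) \<and> (\<Sum>j<m. \<bar>c j\<bar>) \<le> 1 \<and>
      (\<forall>x\<in>Ival \<eta>. \<bar>f x - (\<Sum>j<m. c j * gdict \<eta> (b j) x)\<bar> \<le> \<epsilon>)}"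

definition in_scaled_B1 :: "real \<Rightarrow> real \<Rightarrow> (real \<Rightarrow> real) \<Rightarrow> bool" where
  "in_scaled_B1 \<eta> c f \<longleftrightarrow> (\<exists>h\<in>B1 \<eta>. \<forall>x\<in>Ival \<eta>. f x = c * h x)"

definition L1norm :: "real \<Rightarrow> (real \<Rightarrow> real) \<Rightarrow> ereal" where
  "L1norm \<eta> f = Inf {ereal c | c. c > 0 \<and> in_scaled_B1 \<eta> c f}"

definition L1space :: "real \<Rightarrow> (real \<Rightarrow> real) set" where
  "L1space \<eta> = {f. L1norm \<eta> f < \<infinity>}"

end

theory Submission
  imports Defs "HOL-Complex_Analysis.Complex_Analysis"
begin

(*
  For k > 0, h(z) = 1 / (z^s + k) extends continuously to each closed half-plane 0 <= +-Im z
  (holomorphically inside), with the two extensions agreeing for Re z > 0, and there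
  |z^s + k| >= sin(pi s) |z|^s because arg z^s stays within s pi of 0.  Cauchy's theorem for
  the difference quotient of h on the two half-discs of radius R, subtracted from each other,
  leaves the jump of h across the negative axis plus a full circle around x:

     h(x) = int_0^R rho(t) / (x + t) dt + O(R^-s),   |rho(t)| <= t^-s / (pi sin(pi s)).

  Right-endpoint Riemann sums of this integral are dictionary sums
  sum_j c_j g(x, t_j) with c_j = (R/N) rho(t_j) / (eta + t_j), and a telescoping comparison
  with a primitive bounds sum_j |c_j| by (1/((1-s) eta) + 2/s) / (pi sin(pi s)),
  independently of R and N.  The case k = 0 is a uniform limit of the cases k > 0.
*)

lemma rectangle_le_increment:
  fixes f f' :: "real \<Rightarrow> real"
  assumes ab: "a \<le> b" and cont: "continuous_on {a..b} f"
    and deriv: "\<And>x. a < x \<Longrightarrow> x < b \<Longrightarrow> (f has_real_derivative f' x) (at x)"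
    and decr: "\<And>x. a < x \<Longrightarrow> x < b \<Longrightarrow> f' b \<le> f' x"
  shows "(b - a) * f' b \<le> f b - f a"
proof (cases "a = b")
  case False
  then have "a < b" using ab by simp
  then obtain l z where z: "a < z" "z < b" "(f has_real_derivative l) (at z)" "f b - f a = (b - a) * l"
    using MVT[OF _ cont] deriv real_differentiable_def by metis
  then have "l = f' z" using deriv DERIV_unique by blast
  then show ?thesis using z decr[of z] ab by (simp add: mult_left_mono)
qed simp

lemma rectangle_le_powr_increment:
  fixes s :: real
  assumes s: "0 < s" "s < 1" and ab: "0 \<le> a" "a \<le> b" "0 < b"
  shows "(b - a) * b powr (-s) \<le> (b powr (1-s) - a powr (1-s)) / (1-s)"
proof -
  have "(b - a) * b powr (-s) \<le> b powr (1-s) / (1-s) - a powr (1-s) / (1-s)"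
  proof (rule rectangle_le_increment[OF ab(2)])
    show "continuous_on {a..b} (\<lambda>x. x powr (1-s) / (1-s))"
      using ab s by (intro continuous_intros continuous_on_powr') auto
    fix x assume x: "a < x" "x < b"
    have "((\<lambda>x. x powr (1-s)) has_real_derivative (1-s) * x powr (-s)) (at x)"
      using has_real_derivative_powr[of x "1-s"] x ab by simp
    then show "((\<lambda>x. x powr (1-s) / (1-s)) has_real_derivative x powr (-s)) (at x)"
      using DERIV_cdivide[where c = "1-s"] s by fastforce
    show "b powr (-s) \<le> x powr (-s)" using x ab s by (intro powr_mono2') auto
  qed
  then show ?thesis by (simp add: diff_divide_distrib)
qed

lemma rectangle_le_neg_powr_increment:
  fixes s :: real
  assumes s: "0 < s" and ab: "0 < a" "a \<le> b"
  shows "(b - a) * b powr (-s-1) \<le> (a powr (-s) - b powr (-s)) / s"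
proof -
  have "(b - a) * b powr (-s-1) \<le> - (b powr (-s) / s) - - (a powr (-s) / s)"
  proof (rule rectangle_le_increment[OF ab(2)])
    show "continuous_on {a..b} (\<lambda>x. - (x powr (-s) / s))"
      using ab s by (intro continuous_intros) auto
    fix x assume x: "a < x" "x < b"
    show "((\<lambda>x. - (x powr (-s) / s)) has_real_derivative x powr (-s-1)) (at x)"
      using x ab s by (auto intro!: derivative_eq_intros simp: field_simps)
    show "b powr (-s-1) \<le> x powr (-s-1)" using x ab s by (intro powr_mono2') auto
  qed
  then show ?thesis by (simp add: diff_divide_distrib)
qed

text \<open>A primitive-like majorant for \<open>t\<^sup>-\<^sup>s / (\<eta> + t)\<close>: bounded by \<open>t\<^sup>-\<^sup>s / \<eta>\<close> on \<open>[0, 1]\<close>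
  and by \<open>t\<^sup>-\<^sup>s\<^sup>-\<^sup>1\<close> on \<open>[1/2, \<infinity>)\<close>, with a primitive of each bound switched on where it applies.\<close>

definition powr_ratio_majorant :: "real \<Rightarrow> real \<Rightarrow> real \<Rightarrow> real" where
  "powr_ratio_majorant s \<eta> t =
     (min t 1) powr (1-s) / ((1-s) * \<eta>) + (2 powr s - (max t (1/2)) powr (-s)) / s"

lemma powr_ratio_le_majorant_increment:
  assumes s: "0 < s" "s < 1" and \<eta>: "0 < \<eta>" and d: "0 < d" "d \<le> 1/2" and t: "d \<le> t"
  shows "d * t powr (-s) / (\<eta> + t) \<le> powr_ratio_majorant s \<eta> t - powr_ratio_majorant s \<eta> (t - d)"
proof -
  have t0: "0 < t" using t d by linarith
  have mono1: "(min (t-d) 1) powr (1-s) / ((1-s) * \<eta>) \<le> (min t 1) powr (1-s) / ((1-s) * \<eta>)"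
    using s \<eta> t d by (intro divide_right_mono powr_mono2) auto
  have mono2: "(2 powr s - (max (t-d) (1/2)) powr (-s)) / s \<le> (2 powr s - (max t (1/2)) powr (-s)) / s"
    using s d by (intro divide_right_mono diff_left_mono powr_mono2') auto
  show ?thesis
  proof (cases "t \<le> 1")
    case True
    have "d * t powr (-s) / (\<eta> + t) \<le> (t - (t-d)) * t powr (-s) / \<eta>"
      using \<eta> t0 d by (simp add: divide_left_mono)
    also have "\<dots> \<le> ((t powr (1-s) - (t-d) powr (1-s)) / (1-s)) / \<eta>"
      using rectangle_le_powr_increment[OF s, of "t-d" t] t t0 \<eta> d by (intro divide_right_mono) auto
    also have "\<dots> = (min t 1) powr (1-s) / ((1-s) * \<eta>) - (min (t-d) 1) powr (1-s) / ((1-s) * \<eta>)"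
      using True d by (simp add: min_def diff_divide_distrib)
    finally show ?thesis using mono2 unfolding powr_ratio_majorant_def by linarith
  next
    case False
    have "d * t powr (-s) / (\<eta> + t) \<le> d * t powr (-s) / t"
      using \<eta> t0 d by (intro divide_left_mono) auto
    also have "\<dots> = (t - (t-d)) * t powr (-s-1)"
      using t0 by (simp add: powr_diff powr_minus field_simps)
    also have "\<dots> \<le> ((t-d) powr (-s) - t powr (-s)) / s"
      using rectangle_le_neg_powr_increment[OF s(1), of "t-d" t] d False by auto
    also have "\<dots> = (2 powr s - (max t (1/2)) powr (-s)) / s - (2 powr s - (max (t-d) (1/2)) powr (-s)) / s"
      using False d s by (simp add: max_def field_simps)
    finally show ?thesis using mono1 unfolding powr_ratio_majorant_def by linarith
  qed
qed

lemma powr_ratio_majorant_le: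
  assumes s: "0 < s" "s < 1" and \<eta>: "0 < \<eta>" and t: "0 \<le> t"
  shows "powr_ratio_majorant s \<eta> t \<le> 1 / ((1-s) * \<eta>) + 2 / s"
proof -
  have "(min t 1) powr (1-s) \<le> 1"
    using powr_mono2[of "1-s" "min t 1" 1] s t by simp
  then have "(min t 1) powr (1-s) / ((1-s) * \<eta>) \<le> 1 / ((1-s) * \<eta>)"
    using s \<eta> by (intro divide_right_mono) auto
  moreover have "2 powr s \<le> 2 powr 1" using s by (intro powr_mono) auto
  then have "(2 powr s - (max t (1/2)) powr (-s)) / s \<le> 2 / s"
    using s powr_ge_zero[of "max t (1/2)" "-s"] by (intro divide_right_mono) (auto simp del: powr_ge_zero)
  ultimately show ?thesis unfolding powr_ratio_majorant_def by linarith
qed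

lemma sum_powr_ratio_le:
  assumes s: "0 < s" "s < 1" and \<eta>: "0 < \<eta>" and d: "0 < d" "d \<le> 1/2"
  shows "(\<Sum>i<N. d * (real (Suc i) * d) powr (-s) / (\<eta> + real (Suc i) * d)) \<le> 1 / ((1-s) * \<eta>) + 2 / s"
proof -
  let ?G = "\<lambda>i. powr_ratio_majorant s \<eta> (real i * d)"
  have "(\<Sum>i<N. d * (real (Suc i) * d) powr (-s) / (\<eta> + real (Suc i) * d)) \<le> (\<Sum>i<N. ?G (Suc i) - ?G i)"
  proof (rule sum_mono)
    fix i
    have "d \<le> real (Suc i) * d" using d by simp
    then show "d * (real (Suc i) * d) powr (-s) / (\<eta> + real (Suc i) * d) \<le> ?G (Suc i) - ?G i"
      using powr_ratio_le_majorant_increment[OF s \<eta> d, of "real (Suc i) * d"] by (simp add: algebra_simps)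
  qed
  also have "\<dots> = ?G N - ?G 0"
    by (rule sum_lessThan_telescope)
  also have "?G 0 = 0"
    by (simp add: powr_ratio_majorant_def powr_minus_divide powr_divide)
  finally show ?thesis using powr_ratio_majorant_le[OF s \<eta>, of "real N * d"] d by simp
qed

lemma riemann_sum_error_le:
  fixes \<psi> :: "real \<Rightarrow> real"
  assumes cont: "continuous_on {0..1} \<psi>" and N: "0 < N" and e: "0 \<le> e"
    and modulus: "\<And>u v. u \<in> {0..1} \<Longrightarrow> v \<in> {0..1} \<Longrightarrow> \<bar>u - v\<bar> \<le> 1 / real N \<Longrightarrow> \<bar>\<psi> u - \<psi> v\<bar> \<le> e"
  shows "\<bar>integral {0..1} \<psi> - (\<Sum>j<N. \<psi> (real (Suc j) / real N) / real N)\<bar> \<le> e"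
proof -
  have "\<bar>integral {0..real m / real N} \<psi> - (\<Sum>j<m. \<psi> (real (Suc j) / real N) / real N)\<bar> \<le> real m * e / real N"
    if "m \<le> N" for m
    using that
  proof (induction m)
    case (Suc m)
    define a where "a = real m / real N"
    define b where "b = real (Suc m) / real N"
    have ab: "0 \<le> a" "a \<le> b" "b \<le> 1" "b - a = 1 / real N"
      using Suc.prems N by (auto simp: a_def b_def divide_right_mono field_simps)
    have int: "\<psi> integrable_on {0..b}"
      by (rule integrable_continuous_interval, rule continuous_on_subset[OF cont]) (use ab in auto)
    have split: "integral {0..b} \<psi> = integral {0..a} \<psi> + integral {a..b} \<psi>"
      using Henstock_Kurzweil_Integration.integral_combine[OF ab(1,2) int] by simp
    have "((\<lambda>u. \<psi> u - \<psi> b) has_integral (integral {a..b} \<psi> - (b - a) * \<psi> b)) {a..b}"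
      using integrable_integral[OF integrable_on_subinterval[OF int]] has_integral_const_real[of "\<psi> b" a b] ab
      by (intro has_integral_diff) auto
    then have "norm (integral {a..b} \<psi> - (b - a) * \<psi> b) \<le> e * Henstock_Kurzweil_Integration.content (cbox a b)"
      using modulus ab e by (intro has_integral_bound[OF e]) (auto simp: abs_minus_commute)
    then have piece: "\<bar>integral {a..b} \<psi> - \<psi> b / real N\<bar> \<le> e / real N"
      using ab by simp
    have "\<bar>integral {0..a} \<psi> - (\<Sum>j<m. \<psi> (real (Suc j) / real N) / real N)\<bar> \<le> real m * e / real N"
      using Suc by (simp add: a_def)
    with piece show ?case
      unfolding b_def[symmetric] split by (simp add: b_def add_divide_distrib algebra_simps)
  qed simp
  from this[of N] show ?thesis using N by simp
qed

lemma abs_diff_divide_le: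
  fixes p q a a' \<eta> :: real
  assumes \<eta>: "0 < \<eta>" and a: "\<eta> \<le> a" "\<eta> \<le> a'"
  shows "\<bar>p / a - q / a'\<bar> \<le> \<bar>p - q\<bar> / \<eta> + \<bar>q\<bar> * \<bar>a' - a\<bar> / \<eta>^2"
proof -
  have "p / a - q / a' = (p - q) / a + q * (a' - a) / (a * a')"
    using \<eta> a by (simp add: field_simps)
  then have "\<bar>p / a - q / a'\<bar> \<le> \<bar>p - q\<bar> / a + \<bar>q\<bar> * \<bar>a' - a\<bar> / (a * a')"
    using \<eta> a abs_triangle_ineq[of "(p - q) / a" "q * (a' - a) / (a * a')"] by (simp add: abs_divide abs_mult)
  also have "\<dots> \<le> \<bar>p - q\<bar> / \<eta> + \<bar>q\<bar> * \<bar>a' - a\<bar> / \<eta>^2"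
  proof (intro add_mono divide_left_mono)
    show "\<eta>^2 \<le> a * a'" using \<eta> a by (simp add: power2_eq_square mult_mono)
  qed (use \<eta> a in auto)
  finally show ?thesis .
qed

lemma eventually_const_over_n_less:
  fixes a e :: real
  assumes "0 < e"
  shows "\<forall>\<^sub>F N in sequentially. a / real N < e"
  using order_tendstoD(2)[OF lim_const_over_n[of a] assms] by simp

lemma stieltjes_riemann_sum_approx:
  fixes \<rho> :: "real \<Rightarrow> real"
  assumes cont: "continuous_on {0..R} \<rho>" and R: "0 < R" and \<eta>: "0 < \<eta>" and \<epsilon>: "0 < \<epsilon>"
  shows "\<forall>\<^sub>F N in sequentially. \<forall>x\<ge>\<eta>.
           \<bar>integral {0..1} (\<lambda>u. R * \<rho> (R * u) / (x + R * u))
             - (\<Sum>j<N. R / real N * \<rho> (real (Suc j) * (R / real N)) / (x + real (Suc j) * (R / real N)))\<bar> \<le> \<epsilon>"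
proof -
  define \<phi> where "\<phi> = (\<lambda>u. R * \<rho> (R * u))"
  have cont\<phi>: "continuous_on {0..1} \<phi>"
    unfolding \<phi>_def using R
    by (intro continuous_intros continuous_on_compose2[OF cont]) (auto simp: mult_le_cancel_left1)
  obtain B where B: "0 < B" "\<And>u. u \<in> {0..1} \<Longrightarrow> \<bar>\<phi> u\<bar> \<le> B"
    using compact_imp_bounded[OF compact_continuous_image[OF cont\<phi> compact_Icc]]
    unfolding bounded_pos by auto
  obtain \<delta> where \<delta>: "0 < \<delta>"
    "\<And>u v. u \<in> {0..1} \<Longrightarrow> v \<in> {0..1} \<Longrightarrow> dist v u < \<delta> \<Longrightarrow> dist (\<phi> v) (\<phi> u) < \<epsilon> * \<eta> / 2"
    using compact_uniformly_continuous[OF cont\<phi> compact_Icc] \<epsilon> \<eta>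
    unfolding uniformly_continuous_on_def by (metis half_gt_zero mult_pos_pos)
  have "\<forall>\<^sub>F N in sequentially. 0 < N \<and> 1 / real N < \<delta> \<and> B * R / \<eta>^2 / real N < \<epsilon> / 2"
    using eventually_gt_at_top[of 0] eventually_const_over_n_less[OF \<delta>(1), of 1]
      eventually_const_over_n_less[OF half_gt_zero[OF \<epsilon>], of "B * R / \<eta>^2"]
    by eventually_elim auto
  then show ?thesis
  proof eventually_elim
    case (elim N)
    then have N: "0 < N" "1 / real N < \<delta>" "B * (R / real N) / \<eta>^2 \<le> \<epsilon> / 2"
      by (auto simp: field_simps)
    show ?case
    proof (intro allI impI)
      fix x assume x: "\<eta> \<le> x"
      define \<psi> where "\<psi> = (\<lambda>u. \<phi> u / (x + R * u))"
      have den: "\<eta> \<le> x + R * u" if "u \<in> {0..1}" for u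
        using that R x by (simp add: add_increasing2)
      have "continuous_on {0..1} \<psi>"
        unfolding \<psi>_def using den \<eta> by (intro continuous_intros cont\<phi>) force
      moreover have "\<bar>\<psi> u - \<psi> v\<bar> \<le> \<epsilon>"
        if uv: "u \<in> {0..1}" "v \<in> {0..1}" "\<bar>u - v\<bar> \<le> 1 / real N" for u v
      proof -
        have "\<bar>\<phi> u - \<phi> v\<bar> / \<eta> \<le> (\<epsilon> * \<eta> / 2) / \<eta>"
          using \<delta>(2)[OF uv(2,1)] uv(3) N(2) \<eta> \<epsilon>
          by (intro divide_right_mono) (auto simp: dist_real_def abs_minus_commute)
        then have 1: "\<bar>\<phi> u - \<phi> v\<bar> / \<eta> \<le> \<epsilon> / 2" using \<eta> by simp
        have "\<bar>(x + R * v) - (x + R * u)\<bar> \<le> R / real N"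
          using mult_left_mono[OF uv(3), of R] R
          by (simp add: abs_mult abs_minus_commute flip: right_diff_distrib)
        then have 2: "\<bar>\<phi> v\<bar> * \<bar>(x + R * v) - (x + R * u)\<bar> / \<eta>^2 \<le> B * (R / real N) / \<eta>^2"
          using B uv(2) by (intro divide_right_mono mult_mono) auto
        show ?thesis
          using abs_diff_divide_le[OF \<eta> den[OF uv(1)] den[OF uv(2)], of "\<phi> u" "\<phi> v"] 1 2 N(3)
          unfolding \<psi>_def by linarith
      qed
      ultimately have "\<bar>integral {0..1} \<psi> - (\<Sum>j<N. \<psi> (real (Suc j) / real N) / real N)\<bar> \<le> \<epsilon>"
        using \<epsilon> by (intro riemann_sum_error_le N(1)) auto
      then show "\<bar>integral {0..1} (\<lambda>u. R * \<rho> (R * u) / (x + R * u))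
             - (\<Sum>j<N. R / real N * \<rho> (real (Suc j) * (R / real N)) / (x + real (Suc j) * (R / real N)))\<bar> \<le> \<epsilon>"
        by (simp add: \<psi>_def \<phi>_def mult.commute)
    qed
  qed
qed

definition dict_approx :: "real \<Rightarrow> real \<Rightarrow> (real \<Rightarrow> real) \<Rightarrow> bool" where
  "dict_approx \<eta> M f \<longleftrightarrow> (\<forall>\<epsilon>>0. \<exists>m::nat. \<exists>c b :: nat \<Rightarrow> real.
      (\<forall>j<m. b j > 0) \<and> (\<Sum>j<m. \<bar>c j\<bar>) \<le> M \<and>
      (\<forall>x\<in>Ival \<eta>. \<bar>f x - (\<Sum>j<m. c j * gdict \<eta> (b j) x)\<bar> \<le> \<epsilon>))"

lemma L1space_if_dict_approx:
  assumes M: "0 < M" and f: "dict_approx \<eta> M f"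
  shows "f \<in> L1space \<eta>"
proof -
  have "(\<lambda>x. f x / M) \<in> B1 \<eta>"
    unfolding B1_def
  proof (safe)
    fix \<epsilon> :: real assume \<epsilon>: "0 < \<epsilon>"
    have "0 < \<epsilon> * M" using \<epsilon> M by simp
    then obtain m :: nat and c b :: "nat \<Rightarrow> real" where mcb: "\<forall>j<m. 0 < b j" "(\<Sum>j<m. \<bar>c j\<bar>) \<le> M"
      "\<forall>x\<in>Ival \<eta>. \<bar>f x - (\<Sum>j<m. c j * gdict \<eta> (b j) x)\<bar> \<le> \<epsilon> * M"
      using f unfolding dict_approx_def by blast
    show "\<exists>m::nat. \<exists>c b :: nat \<Rightarrow> real. (\<forall>j<m. 0 < b j) \<and> (\<Sum>j<m. \<bar>c j\<bar>) \<le> 1 \<and>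
          (\<forall>x\<in>Ival \<eta>. \<bar>f x / M - (\<Sum>j<m. c j * gdict \<eta> (b j) x)\<bar> \<le> \<epsilon>)"
    proof (intro exI conjI)
      show "(\<Sum>j<m. \<bar>c j / M\<bar>) \<le> 1"
        using mcb(2) M by (simp add: abs_divide flip: sum_divide_distrib)
      show "\<forall>x\<in>Ival \<eta>. \<bar>f x / M - (\<Sum>j<m. c j / M * gdict \<eta> (b j) x)\<bar> \<le> \<epsilon>"
      proof
        fix x assume x: "x \<in> Ival \<eta>"
        have "f x / M - (\<Sum>j<m. c j / M * gdict \<eta> (b j) x) = (f x - (\<Sum>j<m. c j * gdict \<eta> (b j) x)) / M"
          by (simp add: diff_divide_distrib sum_divide_distrib)
        then show "\<bar>f x / M - (\<Sum>j<m. c j / M * gdict \<eta> (b j) x)\<bar> \<le> \<epsilon>"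
          using mcb(3) x M by (simp add: abs_divide pos_divide_le_eq)
      qed
    qed (use mcb(1) in auto)
  qed
  then have "in_scaled_B1 \<eta> M f"
    unfolding in_scaled_B1_def using M by (intro bexI[of _ "\<lambda>x. f x / M"]) auto
  then have "L1norm \<eta> f \<le> ereal M"
    unfolding L1norm_def using M by (intro Inf_lower) blast
  also have "ereal M < \<infinity>" by simp
  finally show ?thesis unfolding L1space_def by simp
qed

lemma dict_approx_uniform_limit:
  assumes approx: "\<And>\<epsilon>. 0 < \<epsilon> \<Longrightarrow> \<exists>g. dict_approx \<eta> M g \<and> (\<forall>x\<in>Ival \<eta>. \<bar>f x - g x\<bar> \<le> \<epsilon>)"
  shows "dict_approx \<eta> M f"
  unfolding dict_approx_def
proof (intro allI impI)
  fix \<epsilon> :: real assume "0 < \<epsilon>"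
  then obtain g where g: "dict_approx \<eta> M g" "\<forall>x\<in>Ival \<eta>. \<bar>f x - g x\<bar> \<le> \<epsilon> / 2"
    using approx[of "\<epsilon> / 2"] by auto
  then obtain m :: nat and c b :: "nat \<Rightarrow> real" where mcb: "\<forall>j<m. 0 < b j" "(\<Sum>j<m. \<bar>c j\<bar>) \<le> M"
    "\<forall>x\<in>Ival \<eta>. \<bar>g x - (\<Sum>j<m. c j * gdict \<eta> (b j) x)\<bar> \<le> \<epsilon> / 2"
    using \<open>0 < \<epsilon>\<close> unfolding dict_approx_def by (blast dest: half_gt_zero)
  have "\<bar>f x - (\<Sum>j<m. c j * gdict \<eta> (b j) x)\<bar> \<le> \<epsilon>" if x: "x \<in> Ival \<eta>" for x
    using g(2) mcb(3) x abs_triangle_ineq[of "f x - g x" "g x - (\<Sum>j<m. c j * gdict \<eta> (b j) x)"] by fastforce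
  with mcb(1,2) show "\<exists>m::nat. \<exists>c b :: nat \<Rightarrow> real. (\<forall>j<m. 0 < b j) \<and> (\<Sum>j<m. \<bar>c j\<bar>) \<le> M \<and>
      (\<forall>x\<in>Ival \<eta>. \<bar>f x - (\<Sum>j<m. c j * gdict \<eta> (b j) x)\<bar> \<le> \<epsilon>)"
    by blast
qed

text \<open>For \<open>c = \<plusminus>1\<close>, a branch of the logarithm continuous on the closed half-plane
  \<open>0 \<le> c Im z\<close> minus \<open>0\<close>: the cut of \<open>Ln\<close> is rotated into the opposite open half-plane.
  The resulting extensions of \<open>h(z) = 1 / (z\<^sup>s + k)\<close> agree with \<open>h\<close> for \<open>Re z > 0\<close> and differ
  across the negative real axis.\<close>

definition half_Ln :: "real \<Rightarrow> complex \<Rightarrow> complex" where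
  "half_Ln c z = Ln (- (of_real c * \<i>) * z) + of_real c * \<i> * of_real (pi/2)"

definition half_powr :: "real \<Rightarrow> real \<Rightarrow> complex \<Rightarrow> complex" where
  "half_powr s c z = (if z = 0 then 0 else exp (of_real s * half_Ln c z))"

definition inv_powr_plus_half :: "real \<Rightarrow> real \<Rightarrow> real \<Rightarrow> complex \<Rightarrow> complex" where
  "inv_powr_plus_half s k c z = 1 / (half_powr s c z + of_real k)"

definition inv_powr_plus :: "real \<Rightarrow> real \<Rightarrow> complex \<Rightarrow> complex" where
  "inv_powr_plus s k z = 1 / (exp (of_real s * Ln z) + of_real k)"

lemma half_Ln_Re_Im:
  assumes c: "c = 1 \<or> c = -1" and z: "z \<noteq> 0" and h: "0 \<le> c * Im z"
  shows "Re (half_Ln c z) = ln (norm z)" "\<bar>Im (half_Ln c z)\<bar> \<le> pi"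
proof -
  let ?w = "- (of_real c * \<i>) * z"
  have w0: "?w \<noteq> 0" using z c by auto
  have nw: "norm ?w = norm z" using c by (auto simp: norm_mult)
  show "Re (half_Ln c z) = ln (norm z)" using w0 nw by (simp add: half_Ln_def)
  have "\<bar>Im (Ln ?w)\<bar> \<le> pi/2" using Re_Ln_pos_le[OF w0] h by simp
  then show "\<bar>Im (half_Ln c z)\<bar> \<le> pi" using c by (auto simp: half_Ln_def)
qed

lemma half_Ln_eq_Ln:
  assumes c: "c = 1 \<or> c = -1" and z: "0 < Re z"
  shows "half_Ln c z = Ln z"
proof -
  let ?w = "- (of_real c * \<i>) * z"
  have w0: "?w \<noteq> 0" using z c by auto
  have e: "exp (of_real c * \<i> * of_real (pi/2)) = of_real c * \<i>"
    using c by (auto simp: exp_eq_polar cis.ctr complex_eq_iff)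
  have "exp (half_Ln c z) = z" unfolding half_Ln_def exp_add e exp_Ln[OF w0]
    using c by (auto simp: algebra_simps)
  moreover have "- pi < Im (half_Ln c z) \<and> Im (half_Ln c z) \<le> pi"
  proof (cases "c = 1")
    case True
    then have "Im ?w < 0" using z by simp
    then have "- pi < Im (Ln ?w) \<and> Im (Ln ?w) < 0"
      using Im_Ln_pos_le[OF w0] mpi_less_Im_Ln[OF w0] Im_Ln_le_pi[OF w0] by auto
    then show ?thesis using True by (simp add: half_Ln_def)
  next
    case False
    then have "c = -1" and "0 < Im ?w" using c z by auto
    then show ?thesis using Im_Ln_pos_lt_imp[of ?w] by (simp add: half_Ln_def)
  qed
  ultimately show ?thesis by (metis Ln_unique)
qed

lemma sin_pi_mult_pos: "0 < s \<Longrightarrow> s < 1 \<Longrightarrow> 0 < sin (s * pi)"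
  by (intro sin_gt_zero) auto

lemma norm_exp_plus_of_real_ge:
  fixes w :: complex
  assumes s: "0 < s" "s < 1" and k: "0 \<le> k" and w: "\<bar>Im w\<bar> \<le> s * pi"
  shows "sin (s * pi) * exp (Re w) \<le> norm (exp w + of_real k)"
proof -
  let ?a = "exp (Re w)" and ?p = "Im w"
  have a: "?a > 0" by simp
  have sp: "0 < sin (s*pi)" "sin (s*pi) \<le> 1" using sin_pi_mult_pos[OF s] by auto
  have re: "Re (exp w + of_real k) = ?a * cos ?p + k" and im: "Im (exp w + of_real k) = ?a * sin ?p"
    by (simp_all add: Re_exp Im_exp)
  show ?thesis
  proof (cases "cos ?p \<ge> 0")
    case True
    \<comment> \<open>No cancellation with \<open>k \<ge> 0\<close>: the real part alone is at least \<open>a cos p\<close>.\<close>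
    have "?a^2 = (?a * cos ?p)^2 + (?a * sin ?p)^2"
      by (simp add: power_mult_distrib flip: distrib_left)
    also have "\<dots> \<le> (?a * cos ?p + k)^2 + (?a * sin ?p)^2"
      using True k a by (intro add_right_mono power_mono) auto
    also have "\<dots> = (norm (exp w + of_real k))^2"
      by (simp only: cmod_power2 re im)
    finally have "?a \<le> norm (exp w + of_real k)"
      by (meson norm_ge_zero power2_le_imp_le)
    moreover have "sin (s*pi) * ?a \<le> 1 * ?a" using sp a by (intro mult_right_mono) auto
    ultimately show ?thesis by linarith
  next
    case False
    \<comment> \<open>Here \<open>\<pi>/2 < |p| \<le> s\<pi>\<close>, and the imaginary part alone suffices.\<close>
    have p: "pi/2 < \<bar>?p\<bar>"
    proof (rule ccontr)
      assume "\<not> pi/2 < \<bar>?p\<bar>"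
      then show False using False cos_ge_zero[of ?p] by auto
    qed
    have spi: "s * pi < pi" using s by simp
    have "sin (s*pi) = sin (pi - s*pi)" by simp
    also have "\<dots> \<le> sin (pi - \<bar>?p\<bar>)"
      by (intro sin_monotone_2pi_le) (use w p spi in linarith)+
    also have "\<dots> = \<bar>sin ?p\<bar>"
    proof -
      have "\<bar>?p\<bar> \<le> pi" using w spi by linarith
      then have "0 \<le> sin \<bar>?p\<bar>" by (intro sin_ge_zero) auto
      then show ?thesis by (cases "?p \<ge> 0") auto
    qed
    finally have "sin (s*pi) * ?a \<le> \<bar>?a * sin ?p\<bar>" using a by (simp add: abs_mult)
    also have "\<dots> \<le> norm (exp w + of_real k)" using abs_Im_le_cmod[of "exp w + of_real k"] im by simp
    finally show ?thesis .
  qed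
qed

lemma norm_half_powr:
  assumes c: "c = 1 \<or> c = -1"
  shows "norm (half_powr s c z) = norm z powr s"
proof (cases "z = 0")
  case True then show ?thesis by (simp add: half_powr_def)
next
  case False
  let ?w = "- (of_real c * \<i>) * z"
  have w0: "?w \<noteq> 0" using False c by auto
  have nw: "norm ?w = norm z" using c by (auto simp: norm_mult)
  have "Re (half_Ln c z) = ln (norm z)" using w0 nw by (simp add: half_Ln_def)
  then show ?thesis using False by (simp add: half_powr_def norm_exp_eq_Re powr_def)
qed

lemma norm_half_powr_plus_ge:
  assumes c: "c = 1 \<or> c = -1" and h: "c * Im z \<ge> 0" and s: "0 < s" "s < 1" and k: "0 \<le> k"
  shows "sin (s*pi) * norm z powr s \<le> norm (half_powr s c z + of_real k)"
proof (cases "z = 0")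
  case True then show ?thesis using k by (simp add: half_powr_def)
next
  case False
  have im: "\<bar>Im (of_real s * half_Ln c z)\<bar> \<le> s * pi"
    using half_Ln_Re_Im(2)[OF c False h] s by (simp add: abs_mult)
  have "exp (Re (of_real s * half_Ln c z)) = norm z powr s"
    using half_Ln_Re_Im(1)[OF c False h] False by (simp add: powr_def)
  then show ?thesis using norm_exp_plus_of_real_ge[OF s k im] False by (simp add: half_powr_def)
qed

lemma half_powr_plus_nonzero:
  assumes c: "c = 1 \<or> c = -1" and h: "c * Im z \<ge> 0" and s: "0 < s" "s < 1" and k: "0 < k"
  shows "half_powr s c z + of_real k \<noteq> 0"
proof (cases "z = 0")
  case True then show ?thesis using k by (simp add: half_powr_def)
next
  case False
  have "0 < sin (s*pi) * norm z powr s" using sin_pi_mult_pos[OF s] False by simp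
  then show ?thesis using norm_half_powr_plus_ge[OF c h s less_imp_le[OF k]] k by force
qed

lemma norm_inv_powr_plus_half_le:
  assumes c: "c = 1 \<or> c = -1" and h: "c * Im z \<ge> 0" and s: "0 < s" "s < 1" and k: "0 \<le> k"
    and z: "z \<noteq> 0"
  shows "norm (inv_powr_plus_half s k c z) \<le> 1 / (sin (s*pi) * norm z powr s)"
proof -
  have p: "0 < sin (s*pi) * norm z powr s" using sin_pi_mult_pos[OF s] z by simp
  then show ?thesis using norm_half_powr_plus_ge[OF c h s k]
    by (simp add: inv_powr_plus_half_def norm_divide frac_le)
qed

lemma inv_powr_plus_half_eq:
  assumes c: "c = 1 \<or> c = -1" and z: "0 < Re z"
  shows "inv_powr_plus_half s k c z = inv_powr_plus s k z"
proof -
  have "z \<noteq> 0" using z by auto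
  then show ?thesis using half_Ln_eq_Ln[OF c z] by (simp add: inv_powr_plus_half_def inv_powr_plus_def half_powr_def)
qed

lemma inv_powr_plus_of_real:
  assumes "0 < x"
  shows "inv_powr_plus s k (of_real x) = of_real (1 / (x powr s + k))"
  using assms by (simp add: inv_powr_plus_def Ln_of_real powr_def flip: exp_of_real)

lemma continuous_on_half_powr:
  assumes c: "c = 1 \<or> c = -1" and s: "0 < s"
  shows "continuous_on {z. c * Im z \<ge> 0} (half_powr s c)"
proof (rule continuous_on_eq_continuous_within[THEN iffD2], intro ballI)
  fix z assume zH: "z \<in> {z. c * Im z \<ge> 0}"
  show "continuous (at z within {z. c * Im z \<ge> 0}) (half_powr s c)"
  proof (cases "z = 0")
    case False
    have nr: "- (of_real c * \<i>) * z \<notin> \<real>\<^sub>\<le>\<^sub>0"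
      using False zH c by (auto simp: complex_nonpos_Reals_iff complex_eq_iff)
    have "isCont (\<lambda>w. exp (of_real s * half_Ln c w)) z"
      unfolding half_Ln_def using nr by (intro continuous_intros) auto
    moreover have ev: "eventually (\<lambda>w. exp (of_real s * half_Ln c w) = half_powr s c w) (nhds z)"
    proof -
      have "eventually (\<lambda>w. w \<in> - {0}) (nhds z)"
        using False by (intro eventually_nhds_in_open) auto
      then show ?thesis by eventually_elim (auto simp: half_powr_def)
    qed
    ultimately have "isCont (half_powr s c) z" using isCont_cong[OF ev] by simp
    then show ?thesis by (rule continuous_at_imp_continuous_within)
  next
    case True
    have "((\<lambda>w. norm w powr s) \<longlongrightarrow> 0) (at 0 within {z. c * Im z \<ge> 0})"
      by (rule tendsto_zero_powrI[where b=s]) (auto intro!: tendsto_eq_intros s)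
    then have "((\<lambda>w. norm (half_powr s c w)) \<longlongrightarrow> 0) (at 0 within {z. c * Im z \<ge> 0})"
      using norm_half_powr[OF c] by simp
    then have "(half_powr s c \<longlongrightarrow> 0) (at 0 within {z. c * Im z \<ge> 0})"
      by (rule tendsto_norm_zero_cancel)
    then show ?thesis using True by (simp add: continuous_within half_powr_def)
  qed
qed

lemma halfplane_eq_inner: "{z::complex. c * Im z \<ge> 0} = {z. (of_real c * \<i>) \<bullet> z \<ge> 0}"
  "{z::complex. c * Im z > 0} = {z. (of_real c * \<i>) \<bullet> z > 0}"
  by (auto simp: inner_complex_def)

lemma holomorphic_inv_powr_plus:
  assumes s: "0 < s" "s < 1" and k: "0 < k"
  shows "inv_powr_plus s k holomorphic_on {z. 0 < Re z}"
proof -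
  have nz: "exp (of_real s * Ln z) + of_real k \<noteq> 0" if z: "0 < Re z" for z
  proof -
    have "\<exists>c. (c = 1 \<or> c = (-1::real)) \<and> c * Im z \<ge> 0"
    proof (cases "Im z \<ge> 0")
      case True then show ?thesis by (intro exI[of _ 1]) simp
    next
      case False then show ?thesis by (intro exI[of _ "-1"]) simp
    qed
    then obtain c where c: "c = 1 \<or> c = (-1::real)" and h: "c * Im z \<ge> 0" by blast
    have "z \<noteq> 0" using z by auto
    then have "half_powr s c z = exp (of_real s * Ln z)" using half_Ln_eq_Ln[OF c z] by (simp add: half_powr_def)
    then show ?thesis using half_powr_plus_nonzero[OF c h s k] by simp
  qed
  have "Ln holomorphic_on {z. 0 < Re z}"
    by (rule holomorphic_on_Ln) (auto simp: complex_nonpos_Reals_iff)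
  then show ?thesis unfolding inv_powr_plus_def using nz
    by (intro holomorphic_intros) (auto simp: complex_nonpos_Reals_iff)
qed

lemma holomorphic_inv_powr_plus_half:
  assumes c: "c = 1 \<or> c = -1" and s: "0 < s" "s < 1" and k: "0 < k"
  shows "inv_powr_plus_half s k c holomorphic_on {z. c * Im z > 0}"
proof -
  have "half_Ln c holomorphic_on {z. c * Im z > 0}"
    unfolding half_Ln_def by (intro holomorphic_intros) (auto simp: complex_nonpos_Reals_iff)
  then have h1: "(\<lambda>z. 1 / (exp (of_real s * half_Ln c z) + of_real k)) holomorphic_on {z. c * Im z > 0}"
  proof (intro holomorphic_intros)
    fix z assume z: "z \<in> {z. c * Im z > 0}"
    then have "z \<noteq> 0" by auto
    then show "exp (of_real s * half_Ln c z) + of_real k \<noteq> 0"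
      using half_powr_plus_nonzero[OF c _ s k, of z] z by (simp add: half_powr_def)
  qed
  show ?thesis
    by (rule holomorphic_transform[OF h1]) (auto simp: inv_powr_plus_half_def half_powr_def)
qed

lemma continuous_on_inv_powr_plus_half:
  assumes c: "c = 1 \<or> c = -1" and s: "0 < s" "s < 1" and k: "0 < k"
  shows "continuous_on {z. c * Im z \<ge> 0} (inv_powr_plus_half s k c)"
  unfolding inv_powr_plus_half_def using continuous_on_half_powr[OF c s(1)] half_powr_plus_nonzero[OF c _ s k]
  by (intro continuous_intros) auto

text \<open>From \<open>R\<close> to \<open>-R\<close> through the half-plane \<open>0 \<le> c Im z\<close>: counter-clockwise for \<open>c = 1\<close>,
  clockwise for \<open>c = -1\<close>.\<close>

definition half_circle :: "real \<Rightarrow> real \<Rightarrow> real \<Rightarrow> complex" where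
  "half_circle c R = part_circlepath 0 R ((1 - c) * pi) pi"

lemma path_image_half_circle:
  assumes c: "c = 1 \<or> c = -1" and R: "0 < R"
  shows "path_image (half_circle c R) \<subseteq> {z. c * Im z \<ge> 0} \<inter> sphere 0 R"
proof
  fix z assume z: "z \<in> path_image (half_circle c R)"
  then obtain x where x: "x \<in> closed_segment ((1-c)*pi) pi" and zx: "z = R * cis x"
    unfolding half_circle_def path_image_part_circlepath' by auto
  have "0 \<le> c * sin x"
  proof (cases "c = 1")
    case True
    then have "0 \<le> x" "x \<le> pi" using x by (auto simp: closed_segment_eq_real_ivl)
    then show ?thesis using True sin_ge_zero by auto
  next
    case False
    then have c': "c = -1" using c by auto
    then have "pi \<le> x" "x \<le> 2*pi" using x by (auto simp: closed_segment_eq_real_ivl)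
    then have "0 \<le> sin (x - pi)" by (intro sin_ge_zero) auto
    then show ?thesis using c' by simp
  qed
  moreover have "z \<in> sphere 0 R"
    using z path_image_part_circlepath_subset'[OF less_imp_le[OF R], of 0 "(1-c)*pi" pi]
    unfolding half_circle_def by blast
  ultimately show "z \<in> {z. c * Im z \<ge> 0} \<inter> sphere 0 R"
    using R zx by (simp add: mult.left_commute)
qed

lemma path_image_linepath_real:
  "path_image (linepath (of_real a) (of_real b)) \<subseteq> {z. Im z = 0}"
  by (auto simp: in_segment)

text \<open>The difference quotient of \<open>h\<close> at \<open>w\<close>, with its removable singularity filled in; it is
  continuous on the closed half-plane and holomorphic in the open one, so Cauchy's theorem applies on
  half-discs.\<close>

definition inv_powr_plus_dq :: "real \<Rightarrow> real \<Rightarrow> real \<Rightarrow> complex \<Rightarrow> complex \<Rightarrow> complex" where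
  "inv_powr_plus_dq s k c w z = (if z = w then deriv (inv_powr_plus s k) w
     else (inv_powr_plus_half s k c z - inv_powr_plus s k w) / (z - w))"

lemma continuous_on_inv_powr_plus_dq:
  assumes c: "c = 1 \<or> c = -1" and s: "0 < s" "s < 1" and k: "0 < k" and w: "0 < Re w"
  shows "continuous_on {z. c * Im z \<ge> 0} (inv_powr_plus_dq s k c w)"
proof -
  define H where "H = {z. c * Im z \<ge> 0}"
  define A where "A = {z::complex. 0 < Re z}"
  define F where "F = inv_powr_plus_dq s k c w"
  define P where "P = (\<lambda>z. if z = w then deriv (inv_powr_plus s k) w
                   else (inv_powr_plus s k z - inv_powr_plus s k w) / (z - w))"
  have oA: "open A" unfolding A_def by (rule open_halfspace_Re_gt)
  have Pholo: "P holomorphic_on A" unfolding P_def A_def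
    by (rule pole_lemma_open[OF holomorphic_inv_powr_plus[OF s k] oA[unfolded A_def]])
  have contS: "continuous_on (H \<inter> A) F"
  proof (rule continuous_on_eq)
    show "continuous_on (H \<inter> A) P"
      using holomorphic_on_imp_continuous_on[OF Pholo] by (rule continuous_on_subset) auto
    show "\<And>z. z \<in> H \<inter> A \<Longrightarrow> P z = F z"
      using inv_powr_plus_half_eq[OF c] by (auto simp: P_def F_def A_def H_def inv_powr_plus_dq_def)
  qed
  have contT: "continuous_on (H - {w}) F"
  proof (rule continuous_on_eq)
    show "continuous_on (H - {w}) (\<lambda>z. (inv_powr_plus_half s k c z - inv_powr_plus s k w) / (z - w))"
      using continuous_on_inv_powr_plus_half[OF c s k] unfolding H_def
      by (intro continuous_intros) (auto elim: continuous_on_subset)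
  qed (auto simp: F_def inv_powr_plus_dq_def)
  have "(H \<inter> A) \<union> (H - {w}) = H" using w by (auto simp: A_def)
  moreover have "openin (top_of_set H) (H \<inter> A)" using oA by auto
  moreover have "openin (top_of_set H) (H - {w})" by (rule openin_delete) auto
  ultimately have "continuous_on H F"
    using continuous_on_Un_local_open[of "H \<inter> A" "H - {w}" F] contS contT by simp
  then show ?thesis unfolding H_def F_def .
qed

lemma has_contour_integral_halfdisc_dq:
  assumes c: "c = 1 \<or> c = -1" and s: "0 < s" "s < 1" and k: "0 < k" and x0: "0 < x0" and R: "0 < R"
  shows "(inv_powr_plus_dq s k c (of_real x0) has_contour_integral 0)
           (linepath (of_real (-R)) (of_real R) +++ half_circle c R)"
proof -
  define H where "H = {z. c * Im z \<ge> 0}"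
  define F where "F = inv_powr_plus_dq s k c (of_real x0)"
  have contF: "continuous_on H F"
    unfolding H_def F_def by (rule continuous_on_inv_powr_plus_dq[OF c s k]) (use x0 in simp)
  have cI: "of_real c * \<i> \<noteq> 0" using c by auto
  have intH: "interior H = {z. c * Im z > 0}"
    unfolding H_def halfplane_eq_inner using interior_halfspace_ge[OF cI] by simp
  have openI: "open {z. c * Im z > 0}" unfolding halfplane_eq_inner by (rule open_halfspace_gt)
  have Fholo: "F holomorphic_on {z. c * Im z > 0}"
  proof (rule holomorphic_transform)
    show "(\<lambda>z. (inv_powr_plus_half s k c z - inv_powr_plus s k (of_real x0)) / (z - of_real x0))
            holomorphic_on {z. c * Im z > 0}"
      using holomorphic_inv_powr_plus_half[OF c s k] by (intro holomorphic_intros) auto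
  qed (auto simp: F_def inv_powr_plus_dq_def)
  have convH: "convex H" unfolding H_def halfplane_eq_inner by (rule convex_halfspace_ge)
  have st: "pathfinish (linepath (of_real (-R)) (of_real R)) = pathstart (half_circle c R)"
  proof -
    have "exp (\<i> * (2 * complex_of_real pi)) = 1"
      using exp_two_pi_i by (simp add: mult_ac)
    then show ?thesis using c by (auto simp: half_circle_def simp flip: cis_conv_exp)
  qed
  show ?thesis
    unfolding F_def[symmetric]
  proof (rule Cauchy_theorem_convex[OF contF convH finite.emptyI])
    show "\<And>x. x \<in> interior H - {} \<Longrightarrow> F field_differentiable at x"
      using holomorphic_on_imp_differentiable_at[OF Fholo openI] intH by auto
    show "valid_path (linepath (of_real (-R)) (of_real R) +++ half_circle c R)"
      using st by (simp add: half_circle_def)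
    show "path_image (linepath (of_real (-R)) (of_real R) +++ half_circle c R) \<subseteq> H"
      using path_image_join[OF st] path_image_linepath_real[of "-R" R] path_image_half_circle[OF c R]
      unfolding H_def by auto
    show "pathfinish (linepath (of_real (-R)) (of_real R) +++ half_circle c R) =
      pathstart (linepath (of_real (-R)) (of_real R) +++ half_circle c R)"
      by (simp add: half_circle_def flip: cis_conv_exp)
  qed
qed

lemma contour_integral_halfdisc_dq:
  assumes c: "c = 1 \<or> c = -1" and s: "0 < s" "s < 1" and k: "0 < k" and x0: "0 < x0" and R: "0 < R"
  shows "contour_integral (linepath (of_real (-R)) (of_real R)) (inv_powr_plus_dq s k c (of_real x0))
       + contour_integral (half_circle c R) (inv_powr_plus_dq s k c (of_real x0)) = 0"
proof -
  let ?F = "inv_powr_plus_dq s k c (of_real x0)"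
  have cont: "continuous_on {z. c * Im z \<ge> 0} ?F"
    by (rule continuous_on_inv_powr_plus_dq[OF c s k]) (use x0 in simp)
  have "?F contour_integrable_on linepath (of_real (-R)) (of_real R)"
    by (rule contour_integrable_continuous_linepath, rule continuous_on_subset[OF cont])
       (use path_image_linepath_real[of "-R" R] in auto)
  moreover have "?F contour_integrable_on half_circle c R" unfolding half_circle_def
    by (rule contour_integrable_continuous_part_circlepath, rule continuous_on_subset[OF cont])
       (use path_image_half_circle[OF c R] in \<open>auto simp: half_circle_def\<close>)
  moreover have "contour_integral (linepath (of_real (-R)) (of_real R) +++ half_circle c R) ?F = 0"
    using has_contour_integral_halfdisc_dq[OF c s k x0 R] by (rule contour_integral_unique)
  ultimately show ?thesis by (simp add: half_circle_def)
qed

lemma inv_powr_plus_dq_nonneg_real: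
  assumes "0 \<le> t"
  shows "inv_powr_plus_dq s k 1 w (of_real t) = inv_powr_plus_dq s k (-1) w (of_real t)"
proof (cases "t = 0")
  case True then show ?thesis by (simp add: inv_powr_plus_dq_def inv_powr_plus_half_def half_powr_def)
next
  case False
  then have "0 < Re (of_real t)" using assms by simp
  then show ?thesis using inv_powr_plus_half_eq[of 1 _ s k] inv_powr_plus_half_eq[of "-1" _ s k]
    by (simp add: inv_powr_plus_dq_def)
qed

lemma contour_integral_linepath_dq_diff:
  assumes s: "0 < s" "s < 1" and k: "0 < k" and x0: "0 < x0" and R: "0 < R"
  shows "contour_integral (linepath (of_real (-R)) (of_real R)) (inv_powr_plus_dq s k 1 (of_real x0))
       - contour_integral (linepath (of_real (-R)) (of_real R)) (inv_powr_plus_dq s k (-1) (of_real x0))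
       = contour_integral (linepath (of_real (-R)) 0)
           (\<lambda>z. (inv_powr_plus_half s k 1 z - inv_powr_plus_half s k (-1) z) / (z - of_real x0))"
proof -
  define F where "F = (\<lambda>c. inv_powr_plus_dq s k c (of_real x0))"
  have cont: "continuous_on {z. c * Im z \<ge> 0} (F c)" if c: "c = 1 \<or> c = -1" for c
    unfolding F_def by (rule continuous_on_inv_powr_plus_dq[OF c s k]) (use x0 in simp)
  have seg: "closed_segment (of_real (-R)) (of_real R :: complex) \<subseteq> {z. Im z = 0}"
    using path_image_linepath_real[of "-R" R] by simp
  have int: "F c contour_integrable_on linepath (of_real (-R)) (of_real R)" if c: "c = 1 \<or> c = -1" for c
    by (rule contour_integrable_continuous_linepath, rule continuous_on_subset[OF cont[OF c]])
       (use seg in auto)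
  have cdiff: "continuous_on (closed_segment (of_real (-R)) (of_real R)) (\<lambda>z. F 1 z - F (-1) z)"
    by (intro continuous_intros; rule continuous_on_subset[OF cont[of 1]] continuous_on_subset[OF cont[of "-1"]])
       (use seg in auto)
  have "0 \<in> closed_segment (of_real (-R)) (of_real R :: complex)"
    using R by (auto simp: closed_segment_Reals closed_segment_eq_real_ivl image_iff)
  then have split: "contour_integral (linepath (of_real (-R)) (of_real R)) (\<lambda>z. F 1 z - F (-1) z) =
       contour_integral (linepath (of_real (-R)) 0) (\<lambda>z. F 1 z - F (-1) z) +
       contour_integral (linepath 0 (of_real R)) (\<lambda>z. F 1 z - F (-1) z)"
    by (rule contour_integral_split_linepath[OF cdiff])
  have "contour_integral (linepath 0 (of_real R)) (\<lambda>z. F 1 z - F (-1) z) =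
        contour_integral (linepath 0 (of_real R)) (\<lambda>z. 0)"
    by (rule contour_integral_eq)
       (use R in \<open>auto simp: F_def closed_segment_Reals closed_segment_eq_real_ivl inv_powr_plus_dq_nonneg_real\<close>)
  moreover have "contour_integral (linepath (of_real (-R)) 0) (\<lambda>z. F 1 z - F (-1) z) =
       contour_integral (linepath (of_real (-R)) 0)
         (\<lambda>z. (inv_powr_plus_half s k 1 z - inv_powr_plus_half s k (-1) z) / (z - of_real x0))"
  proof (rule contour_integral_eq)
    fix z :: complex assume "z \<in> path_image (linepath (of_real (-R)) 0)"
    then have "z \<noteq> of_real x0"
      using R x0 by (auto simp: closed_segment_Reals closed_segment_eq_real_ivl)
    then show "F 1 z - F (-1) z =
        (inv_powr_plus_half s k 1 z - inv_powr_plus_half s k (-1) z) / (z - of_real x0)"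
      by (simp add: F_def inv_powr_plus_dq_def diff_divide_distrib)
  qed
  ultimately show ?thesis
    using split int[of 1] int[of "-1"] by (simp add: F_def contour_integral_diff)
qed

lemma contour_integral_circlepath_split:
  assumes f: "continuous_on (sphere 0 R) f" and R: "0 < R"
  shows "contour_integral (part_circlepath 0 R 0 pi) f + contour_integral (part_circlepath 0 R pi (2*pi)) f
         = contour_integral (circlepath 0 R) f"
proof -
  let ?g = "\<lambda>t. f (0 + of_real R * cis t) * of_real R * \<i> * cis t"
  have "continuous_on UNIV (\<lambda>t. f (0 + of_real R * cis t))"
    by (rule continuous_on_compose2[OF f]) (auto intro!: continuous_intros simp: norm_mult abs_of_pos[OF R])
  then have "?g integrable_on {0..2*pi}"
    by (intro integrable_continuous_interval continuous_intros) (auto elim: continuous_on_subset)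
  moreover have "contour_integral (part_circlepath 0 R 0 pi) f = integral {0..pi} ?g"
    by (rule contour_integral_part_circlepath_eq) simp
  moreover have "contour_integral (part_circlepath 0 R pi (2*pi)) f = integral {pi..2*pi} ?g"
    by (rule contour_integral_part_circlepath_eq) simp
  moreover have "contour_integral (circlepath 0 R) f = integral {0..2*pi} ?g"
    unfolding circlepath_def by (rule contour_integral_part_circlepath_eq) simp
  ultimately show ?thesis using Henstock_Kurzweil_Integration.integral_combine[of 0 pi "2*pi" ?g] by simp
qed

lemma contour_integral_half_circles_pole:
  assumes x0: "0 < x0" "x0 < R"
  shows "contour_integral (half_circle 1 R) (\<lambda>z. 1 / (z - of_real x0))
       - contour_integral (half_circle (-1) R) (\<lambda>z. 1 / (z - of_real x0)) = 2 * of_real pi * \<i>"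
proof -
  have "((\<lambda>z. 1 / (z - of_real x0)) has_contour_integral (2 * of_real pi * \<i> * 1)) (circlepath 0 R)"
    using Cauchy_integral_circlepath_simple[of "\<lambda>_. 1"] x0 by (auto intro: holomorphic_intros)
  then have "contour_integral (circlepath 0 R) (\<lambda>z. 1 / (z - of_real x0)) = 2 * of_real pi * \<i>"
    by (simp add: contour_integral_unique)
  moreover have "continuous_on (sphere 0 R) (\<lambda>z::complex. 1 / (z - of_real x0))"
    using x0 by (intro continuous_intros) auto
  ultimately show ?thesis
    using contour_integral_circlepath_split[of R "\<lambda>z. 1 / (z - of_real x0)"] x0
    by (simp add: half_circle_def contour_integral_part_circlepath_reverse[of 0 R "2*pi"])
qed

lemma contour_integral_half_circle_dq:
  assumes c: "c = 1 \<or> c = -1" and s: "0 < s" "s < 1" and k: "0 < k" and x0: "0 < x0" "x0 < R"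
  shows "contour_integral (half_circle c R) (inv_powr_plus_dq s k c (of_real x0))
       = contour_integral (half_circle c R) (\<lambda>z. inv_powr_plus_half s k c z / (z - of_real x0))
         - inv_powr_plus s k (of_real x0) * contour_integral (half_circle c R) (\<lambda>z. 1 / (z - of_real x0))"
proof -
  have R: "0 < R" using x0 by linarith
  have sub: "path_image (half_circle c R) \<subseteq> {z. c * Im z \<ge> 0} - {of_real x0}"
    using path_image_half_circle[OF c R] x0 by auto
  have i1: "(\<lambda>z. inv_powr_plus_half s k c z / (z - of_real x0)) contour_integrable_on half_circle c R"
    unfolding half_circle_def
    by (rule contour_integrable_continuous_part_circlepath, use sub in
        \<open>auto intro!: continuous_intros intro: continuous_on_subset[OF continuous_on_inv_powr_plus_half[OF c s k]]
          simp: half_circle_def\<close>)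
  have i2: "(\<lambda>z. 1 / (z - of_real x0)) contour_integrable_on half_circle c R"
    unfolding half_circle_def
    by (rule contour_integrable_continuous_part_circlepath, use sub in
        \<open>auto intro!: continuous_intros simp: half_circle_def\<close>)
  have "contour_integral (half_circle c R) (inv_powr_plus_dq s k c (of_real x0)) =
        contour_integral (half_circle c R) (\<lambda>z. inv_powr_plus_half s k c z / (z - of_real x0)
          - inv_powr_plus s k (of_real x0) * (1 / (z - of_real x0)))"
    by (rule contour_integral_eq) (use sub in \<open>auto simp: inv_powr_plus_dq_def diff_divide_distrib\<close>)
  also have "\<dots> = contour_integral (half_circle c R) (\<lambda>z. inv_powr_plus_half s k c z / (z - of_real x0))
        - inv_powr_plus s k (of_real x0) * contour_integral (half_circle c R) (\<lambda>z. 1 / (z - of_real x0))"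
    unfolding contour_integral_diff[OF i1 contour_integrable_lmul[OF i2]] contour_integral_lmul[OF i2] ..
  finally show ?thesis .
qed

lemma inv_powr_plus_cauchy_repr:
  assumes s: "0 < s" "s < 1" and k: "0 < k" and x0: "0 < x0" "x0 < R"
  shows "inv_powr_plus s k (of_real x0) * (2 * of_real pi * \<i>) =
           contour_integral (linepath (of_real (-R)) 0)
             (\<lambda>z. (inv_powr_plus_half s k 1 z - inv_powr_plus_half s k (-1) z) / (z - of_real x0))
         + contour_integral (half_circle 1 R) (\<lambda>z. inv_powr_plus_half s k 1 z / (z - of_real x0))
         - contour_integral (half_circle (-1) R) (\<lambda>z. inv_powr_plus_half s k (-1) z / (z - of_real x0))"
proof -
  have R: "0 < R" using x0 by linarith
  have combine: "h * T = D + P1 - P2"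
    if "L1 + A1 = 0" "L2 + A2 = 0" "L1 - L2 = D" "A1 = P1 - h * B1" "A2 = P2 - h * B2" "B1 - B2 = T"
    for L1 L2 A1 A2 D P1 P2 h B1 B2 T :: complex
  proof -
    have "D + P1 - P2 = (L1 + A1) - (L2 + A2) + h * (B1 - B2)"
      using that(3-5) by (simp add: algebra_simps)
    then show ?thesis using that(1,2,6) by simp
  qed
  show ?thesis
    by (rule combine[OF contour_integral_halfdisc_dq[of 1 s k x0 R] contour_integral_halfdisc_dq[of "-1" s k x0 R]
          contour_integral_linepath_dq_diff[OF s k x0(1) R]
          contour_integral_half_circle_dq[of 1 s k x0 R] contour_integral_half_circle_dq[of "-1" s k x0 R]
          contour_integral_half_circles_pole[OF x0]]) (use s k x0 R in auto)
qed

lemma norm_contour_integral_half_circle_le: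
  assumes c: "c = 1 \<or> c = -1" and s: "0 < s" "s < 1" and k: "0 < k"
    and x0: "0 < x0" "x0 \<le> 1" and R: "2 \<le> R"
  shows "norm (contour_integral (half_circle c R) (\<lambda>z. inv_powr_plus_half s k c z / (z - of_real x0)))
         \<le> 2 * pi / (sin (s*pi) * R powr s)"
proof -
  have R0: "0 < R" using R by simp
  have sub: "path_image (half_circle c R) \<subseteq> {z. c * Im z \<ge> 0} - {of_real x0}"
    using path_image_half_circle[OF c R0] x0 R by auto
  have int: "(\<lambda>z. inv_powr_plus_half s k c z / (z - of_real x0)) contour_integrable_on half_circle c R"
    unfolding half_circle_def
    by (rule contour_integrable_continuous_part_circlepath, use sub in
        \<open>auto intro!: continuous_intros intro: continuous_on_subset[OF continuous_on_inv_powr_plus_half[OF c s k]]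
          simp: half_circle_def\<close>)
  have sp: "0 < sin (s*pi)" by (rule sin_pi_mult_pos[OF s])
  define B where "B = 2 / (sin (s*pi) * R powr s * R)"
  have B0: "0 \<le> B" using sp R0 by (simp add: B_def)
  have bnd: "norm (inv_powr_plus_half s k c z / (z - of_real x0)) \<le> B"
    if z: "z \<in> path_image (half_circle c R)" for z
  proof -
    have nz: "norm z = R" and hz: "0 \<le> c * Im z" using z path_image_half_circle[OF c R0] by auto
    have "norm (inv_powr_plus_half s k c z) \<le> 1 / (sin (s*pi) * R powr s)"
      using norm_inv_powr_plus_half_le[OF c hz s less_imp_le[OF k]] nz R0 by auto
    moreover have "R / 2 \<le> norm (z - of_real x0)"
      using norm_triangle_ineq2[of z "of_real x0"] nz x0 R by simp
    ultimately have "norm (inv_powr_plus_half s k c z) / norm (z - of_real x0)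
        \<le> (1 / (sin (s*pi) * R powr s)) / (R / 2)"
      using R0 sp by (intro frac_le) auto
    then show ?thesis by (simp add: B_def norm_divide field_simps)
  qed
  have "norm (contour_integral (half_circle c R) (\<lambda>z. inv_powr_plus_half s k c z / (z - of_real x0)))
        \<le> B * R * \<bar>pi - (1-c)*pi\<bar>"
    using contour_integral_bound_part_circlepath[OF int[unfolded half_circle_def] B0] R0 bnd
    by (auto simp: half_circle_def)
  also have "\<dots> = 2 * pi / (sin (s*pi) * R powr s)" using c R0 by (auto simp: B_def)
  finally show ?thesis .
qed

text \<open>The jump of \<open>h\<close> across the cut \<open>(-\<infinity>, 0]\<close>: for \<open>t > 0\<close> it equals
  \<open>sin(\<pi>s) t\<^sup>s / (\<pi> |t\<^sup>s e\<^sup>i\<^sup>\<pi>\<^sup>s + k|\<^sup>2)\<close>, but only its continuity and the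
  bound \<open>t\<^sup>-\<^sup>s / (\<pi> sin(\<pi>s))\<close> are used.\<close>

definition stieltjes_density :: "real \<Rightarrow> real \<Rightarrow> real \<Rightarrow> real" where
  "stieltjes_density s k t = Re ((inv_powr_plus_half s k (-1) (- of_real t)
     - inv_powr_plus_half s k 1 (- of_real t)) / (2 * of_real pi * \<i>))"

lemma continuous_on_stieltjes_density:
  assumes s: "0 < s" "s < 1" and k: "0 < k"
  shows "continuous_on A (stieltjes_density s k)"
proof -
  have "continuous_on A (\<lambda>t. inv_powr_plus_half s k c (- of_real t))" if c: "c = 1 \<or> c = -1" for c
    by (rule continuous_on_compose2[OF continuous_on_inv_powr_plus_half[OF c s k]])
       (auto intro!: continuous_intros)
  from this[of 1] this[of "-1"] show ?thesis
    unfolding stieltjes_density_def by (intro continuous_intros) auto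
qed

lemma abs_stieltjes_density_le:
  assumes s: "0 < s" "s < 1" and k: "0 \<le> k" and t: "0 < t"
  shows "\<bar>stieltjes_density s k t\<bar> \<le> t powr (-s) / (pi * sin (s * pi))"
proof -
  let ?z = "- of_real t :: complex"
  have z: "?z \<noteq> 0" "norm ?z = t" using t by auto
  have h: "norm (inv_powr_plus_half s k c ?z) \<le> 1 / (sin (s*pi) * t powr s)" if c: "c = 1 \<or> c = -1" for c
    using norm_inv_powr_plus_half_le[OF c _ s k z(1)] z(2) by simp
  have "\<bar>stieltjes_density s k t\<bar>
      \<le> norm (inv_powr_plus_half s k (-1) ?z - inv_powr_plus_half s k 1 ?z) / (2 * pi)"
    unfolding stieltjes_density_def using abs_Re_le_cmod
    by (rule order_trans) (simp add: norm_divide norm_mult)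
  also have "\<dots> \<le> (2 / (sin (s*pi) * t powr s)) / (2 * pi)"
    using norm_triangle_ineq4[of "inv_powr_plus_half s k (-1) ?z" "inv_powr_plus_half s k 1 ?z"] h[of 1] h[of "-1"]
    by (intro divide_right_mono) auto
  also have "\<dots> = t powr (-s) / (pi * sin (s * pi))" by (simp add: powr_minus field_simps)
  finally show ?thesis .
qed

lemma has_integral_stieltjes_density:
  assumes s: "0 < s" "s < 1" and k: "0 < k" and x0: "0 < x0" and R: "0 < R"
  shows "((\<lambda>u. R * stieltjes_density s k (R * u) / (x0 + R * u)) has_integral
          Re (contour_integral (linepath (of_real (-R)) 0)
             (\<lambda>z. (inv_powr_plus_half s k 1 z - inv_powr_plus_half s k (-1) z) / (z - of_real x0))
           / (2 * of_real pi * \<i>))) {0..1}"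
proof -
  define D where "D = (\<lambda>z. (inv_powr_plus_half s k 1 z - inv_powr_plus_half s k (-1) z) / (z - of_real x0))"
  have seg: "closed_segment 0 (of_real (-R)) \<subseteq> {z::complex. Im z = 0 \<and> Re z \<le> 0}"
    using R by (auto simp: closed_segment_Reals closed_segment_eq_real_ivl)
  have "continuous_on (closed_segment 0 (of_real (-R))) D"
    unfolding D_def
    by (intro continuous_intros continuous_on_subset[OF continuous_on_inv_powr_plus_half[of 1, OF _ s k]]
        continuous_on_subset[OF continuous_on_inv_powr_plus_half[of "-1", OF _ s k]]) (use seg x0 in auto)
  then have "(D has_contour_integral contour_integral (linepath 0 (of_real (-R))) D) (linepath 0 (of_real (-R)))"
    by (intro has_contour_integral_integral contour_integrable_continuous_linepath)
  moreover have "contour_integral (linepath 0 (of_real (-R))) D = - contour_integral (linepath (of_real (-R)) 0) D"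
    using contour_integral_reversepath[of "linepath (of_real (-R)) 0" D] by simp
  ultimately have "((\<lambda>u. - (D (linepath 0 (of_real (-R)) u) * (of_real (-R) - 0)) / (2 * of_real pi * \<i>))
       has_integral contour_integral (linepath (of_real (-R)) 0) D / (2 * of_real pi * \<i>)) {0..1}"
    unfolding has_contour_integral_linepath by (intro has_integral_divide) (simp add: has_integral_neg_iff)
  from has_integral_Re[OF this] show ?thesis
    unfolding D_def[symmetric]
  proof (rule has_integral_cong[THEN iffD1, rotated])
    fix u :: real assume u: "u \<in> {0..1}"
    have lp: "linepath 0 (of_real (-R)) u = (- of_real (R * u) :: complex)"
      by (simp add: linepath_def scaleR_conv_of_real algebra_simps)
    have pos: "0 < x0 + R * u" using u R x0 by (simp add: add_pos_nonneg)
    have alg: "- ((a - b) / (- q) * (- r)) / P = r / q * ((b - a) / P)"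
      if "q \<noteq> 0" "P \<noteq> 0" for a b q r P :: complex
      using that by (simp add: field_simps)
    have e1: "- of_real (R * u) - of_real x0 = - (of_real (x0 + R * u) :: complex)" by simp
    have e2: "of_real (-R) - 0 = - (of_real R :: complex)" by simp
    have "- (D (linepath 0 (of_real (-R)) u) * (of_real (-R) - 0)) / (2 * of_real pi * \<i>)
        = of_real (R / (x0 + R * u)) * ((inv_powr_plus_half s k (-1) (- of_real (R * u))
            - inv_powr_plus_half s k 1 (- of_real (R * u))) / (2 * of_real pi * \<i>))"
      unfolding lp D_def e1 e2 of_real_divide by (rule alg) (use pos in \<open>auto simp del: of_real_add of_real_mult\<close>)
    then have "Re (- (D (linepath 0 (of_real (-R)) u) * (of_real (-R) - 0)) / (2 * of_real pi * \<i>))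
        = Re (of_real (R / (x0 + R * u)) * ((inv_powr_plus_half s k (-1) (- of_real (R * u))
            - inv_powr_plus_half s k 1 (- of_real (R * u))) / (2 * of_real pi * \<i>)))"
      by (rule arg_cong)
    also have "\<dots> = R * stieltjes_density s k (R * u) / (x0 + R * u)"
    proof -
      have Re_scale: "Re (of_real a * z) = a * Re z" for a z by simp
      show ?thesis by (simp only: Re_scale stieltjes_density_def times_divide_eq_left)
    qed
    finally show "Re (- (D (linepath 0 (of_real (-R)) u) * (of_real (-R) - 0)) / (2 * of_real pi * \<i>))
        = R * stieltjes_density s k (R * u) / (x0 + R * u)" .
  qed
qed

lemma inv_powr_plus_stieltjes_approx:
  assumes s: "0 < s" "s < 1" and k: "0 < k" and x: "0 < x" "x \<le> 1" and R: "2 \<le> R"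
  shows "\<bar>1 / (x powr s + k) - integral {0..1} (\<lambda>u. R * stieltjes_density s k (R * u) / (x + R * u))\<bar>
           \<le> 2 / (sin (s * pi) * R powr s)"
proof -
  define L where "L = contour_integral (linepath (of_real (-R)) 0)
             (\<lambda>z. (inv_powr_plus_half s k 1 z - inv_powr_plus_half s k (-1) z) / (z - of_real x))"
  define A where "A = (\<lambda>c. contour_integral (half_circle c R) (\<lambda>z. inv_powr_plus_half s k c z / (z - of_real x)))"
  have R0: "0 < R" using R by simp
  have "of_real (1 / (x powr s + k)) * (2 * of_real pi * \<i>) = L + A 1 - A (-1)"
    using inv_powr_plus_cauchy_repr[OF s k x(1), of R] inv_powr_plus_of_real[OF x(1), of s k] x R
    unfolding L_def A_def by simp
  then have "of_real (1 / (x powr s + k)) = L / (2 * of_real pi * \<i>) + (A 1 - A (-1)) / (2 * of_real pi * \<i>)"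
    by (simp add: field_simps)
  from arg_cong[OF this, of Re]
  have "1 / (x powr s + k) = Re (L / (2 * of_real pi * \<i>)) + Re ((A 1 - A (-1)) / (2 * of_real pi * \<i>))"
    by (simp only: Re_complex_of_real plus_complex.sel)
  moreover have "integral {0..1} (\<lambda>u. R * stieltjes_density s k (R * u) / (x + R * u)) = Re (L / (2 * of_real pi * \<i>))"
    unfolding L_def by (rule integral_unique[OF has_integral_stieltjes_density[OF s k x(1) R0]])
  moreover have "\<bar>Re ((A 1 - A (-1)) / (2 * of_real pi * \<i>))\<bar> \<le> norm (A 1 - A (-1)) / (2 * pi)"
    using abs_Re_le_cmod by (rule order_trans) (simp add: norm_divide norm_mult)
  moreover have "norm (A 1 - A (-1)) / (2 * pi) \<le> 2 / (sin (s * pi) * R powr s)"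
  proof -
    have "norm (A 1 - A (-1)) \<le> 2 * (2 * pi / (sin (s*pi) * R powr s))"
      using norm_triangle_ineq4[of "A 1" "A (-1)"] unfolding A_def
      using norm_contour_integral_half_circle_le[of 1 s k x R] norm_contour_integral_half_circle_le[of "-1" s k x R]
        s k x R by simp
    then have "norm (A 1 - A (-1)) / (2 * pi) \<le> 2 * (2 * pi / (sin (s*pi) * R powr s)) / (2 * pi)"
      by (rule divide_right_mono) simp
    then show ?thesis by (simp add: mult.commute)
  qed
  ultimately show ?thesis by linarith
qed

lemma eventually_div_powr_less:
  fixes a e s :: real
  assumes s: "0 < s" and e: "0 < e"
  shows "\<forall>\<^sub>F R in at_top. a / R powr s < e"
proof -
  have "((\<lambda>R. R powr (-s)) \<longlongrightarrow> 0) at_top"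
    using s by (intro tendsto_neg_powr filterlim_ident) auto
  then have "((\<lambda>R. a * R powr (-s)) \<longlongrightarrow> 0) at_top"
    using tendsto_mult_left[of _ 0 at_top a] by simp
  from order_tendstoD(2)[OF this e] show ?thesis
    by (simp add: powr_minus divide_inverse)
qed

lemma sum_abs_density_coeffs_le:
  assumes s: "0 < s" "s < 1" and \<eta>: "0 < \<eta>" and k: "0 \<le> k" and d: "0 < d" "d \<le> 1/2"
  shows "(\<Sum>j<N. \<bar>d * stieltjes_density s k (real (Suc j) * d) / (\<eta> + real (Suc j) * d)\<bar>)
           \<le> (1 / ((1-s) * \<eta>) + 2 / s) / (pi * sin (s * pi))"
proof -
  have \<sigma>: "0 < pi * sin (s * pi)" using sin_pi_mult_pos[OF s] by simp
  have "\<bar>d * stieltjes_density s k t / (\<eta> + t)\<bar> \<le> d * t powr (-s) / (\<eta> + t) / (pi * sin (s * pi))"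
    if t: "0 < t" for t
  proof -
    have "\<bar>d * stieltjes_density s k t / (\<eta> + t)\<bar> = d * \<bar>stieltjes_density s k t\<bar> / (\<eta> + t)"
      using d t \<eta> by (simp add: abs_divide abs_mult)
    also have "\<dots> \<le> d * (t powr (-s) / (pi * sin (s * pi))) / (\<eta> + t)"
      using abs_stieltjes_density_le[OF s k t] d t \<eta> by (intro divide_right_mono mult_left_mono) auto
    finally show ?thesis by (simp add: mult.commute)
  qed
  then have "(\<Sum>j<N. \<bar>d * stieltjes_density s k (real (Suc j) * d) / (\<eta> + real (Suc j) * d)\<bar>)
      \<le> (\<Sum>j<N. d * (real (Suc j) * d) powr (-s) / (\<eta> + real (Suc j) * d)) / (pi * sin (s * pi))"
    using d by (simp add: sum_divide_distrib sum_mono)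
  also have "\<dots> \<le> (1 / ((1-s) * \<eta>) + 2 / s) / (pi * sin (s * pi))"
    using sum_powr_ratio_le[OF s \<eta> d, of N] \<sigma> by (intro divide_right_mono) auto
  finally show ?thesis .
qed

lemma dict_approx_inv_powr_plus_pos:
  assumes \<eta>: "0 < \<eta>" and s: "0 < s" "s < 1" and k: "0 < k"
  shows "dict_approx \<eta> ((1 / ((1-s) * \<eta>) + 2 / s) / (pi * sin (s * pi))) (\<lambda>x. 1 / (x powr s + k))"
  unfolding dict_approx_def
proof (intro allI impI)
  fix \<epsilon> :: real assume \<epsilon>: "0 < \<epsilon>"
  define \<rho> where "\<rho> = stieltjes_density s k"
  have "\<forall>\<^sub>F R in at_top. 2 \<le> R \<and> 2 / sin (s * pi) / R powr s < \<epsilon> / 2"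
    using eventually_ge_at_top[of 2] eventually_div_powr_less[OF s(1) half_gt_zero[OF \<epsilon>], of "2 / sin (s * pi)"]
    by eventually_elim auto
  then obtain R where "2 \<le> R" "2 / sin (s * pi) / R powr s < \<epsilon> / 2"
    unfolding eventually_at_top_linorder by (meson order_refl)
  then have R: "2 \<le> R" "2 / (sin (s * pi) * R powr s) \<le> \<epsilon> / 2" by simp_all
  then have R0: "0 < R" by simp
  have "\<forall>\<^sub>F N in sequentially. 0 < N \<and> R / real N < 1/2 \<and> (\<forall>x\<ge>\<eta>.
           \<bar>integral {0..1} (\<lambda>u. R * \<rho> (R * u) / (x + R * u))
             - (\<Sum>j<N. R / real N * \<rho> (real (Suc j) * (R / real N)) / (x + real (Suc j) * (R / real N)))\<bar>
           \<le> \<epsilon> / 2)"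
    using eventually_gt_at_top[of 0] eventually_const_over_n_less[OF half_gt_zero[OF zero_less_one], of R]
      stieltjes_riemann_sum_approx[OF continuous_on_stieltjes_density[OF s k] R0 \<eta> half_gt_zero[OF \<epsilon>],
        folded \<rho>_def]
    by eventually_elim auto
  then obtain N where N: "0 < N" "R / real N < 1/2" and riemann: "\<And>x. \<eta> \<le> x \<Longrightarrow>
           \<bar>integral {0..1} (\<lambda>u. R * \<rho> (R * u) / (x + R * u))
             - (\<Sum>j<N. R / real N * \<rho> (real (Suc j) * (R / real N)) / (x + real (Suc j) * (R / real N)))\<bar>
           \<le> \<epsilon> / 2"
    unfolding eventually_sequentially by (meson order_refl)
  define d where "d = R / real N"
  have d: "0 < d" "d \<le> 1/2" using N R0 by (auto simp: d_def)
  define b where "b = (\<lambda>j. real (Suc j) * d)"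
  define c where "c = (\<lambda>j. d * \<rho> (b j) / (\<eta> + b j))"
  have b: "0 < b j" for j using d by (simp add: b_def)
  have "\<bar>1 / (x powr s + k) - (\<Sum>j<N. c j * gdict \<eta> (b j) x)\<bar> \<le> \<epsilon>" if "x \<in> Ival \<eta>" for x
  proof -
    from that have x: "\<eta> \<le> x" "x \<le> 1" by (auto simp: Ival_def)
    have sum_eq: "(\<Sum>j<N. c j * gdict \<eta> (b j) x)
        = (\<Sum>j<N. R / real N * \<rho> (real (Suc j) * (R / real N)) / (x + real (Suc j) * (R / real N)))"
    proof (rule sum.cong[OF refl])
      fix j
      have "0 < \<eta> + b j" "0 < x + b j" using b[of j] \<eta> x by auto
      then show "c j * gdict \<eta> (b j) x
          = R / real N * \<rho> (real (Suc j) * (R / real N)) / (x + real (Suc j) * (R / real N))"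
        by (simp add: c_def gdict_def b_def d_def)
    qed
    have "\<bar>1 / (x powr s + k) - integral {0..1} (\<lambda>u. R * \<rho> (R * u) / (x + R * u))\<bar> \<le> \<epsilon> / 2"
      using inv_powr_plus_stieltjes_approx[OF s k _ x(2), of R] R \<eta> x by (simp add: \<rho>_def)
    then show ?thesis
      unfolding sum_eq using riemann[OF x(1)] dist_triangle[of "1 / (x powr s + k)" _
        "integral {0..1} (\<lambda>u. R * \<rho> (R * u) / (x + R * u))"]
      unfolding dist_real_def by linarith
  qed
  moreover have "(\<Sum>j<N. \<bar>c j\<bar>) \<le> (1 / ((1-s) * \<eta>) + 2 / s) / (pi * sin (s * pi))"
    using sum_abs_density_coeffs_le[OF s \<eta> less_imp_le[OF k] d, of N] by (simp add: c_def b_def \<rho>_def)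
  ultimately show "\<exists>m::nat. \<exists>c b :: nat \<Rightarrow> real. (\<forall>j<m. 0 < b j) \<and>
      (\<Sum>j<m. \<bar>c j\<bar>) \<le> (1 / ((1-s) * \<eta>) + 2 / s) / (pi * sin (s * pi)) \<and>
      (\<forall>x\<in>Ival \<eta>. \<bar>1 / (x powr s + k) - (\<Sum>j<m. c j * gdict \<eta> (b j) x)\<bar> \<le> \<epsilon>)"
    using b by blast
qed

lemma dict_approx_inv_powr_plus:
  assumes \<eta>: "0 < \<eta>" and s: "0 < s" "s < 1" and k: "0 \<le> k"
  shows "dict_approx \<eta> ((1 / ((1-s) * \<eta>) + 2 / s) / (pi * sin (s * pi))) (\<lambda>x. 1 / (x powr s + k))"
proof (rule dict_approx_uniform_limit)
  fix \<epsilon> :: real assume \<epsilon>: "0 < \<epsilon>"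
  define q where "q = \<eta> powr s"
  have q: "0 < q" unfolding q_def using \<eta> by simp
  define \<delta> where "\<delta> = \<epsilon> * q^2"
  have \<delta>: "0 < \<delta>" unfolding \<delta>_def using \<epsilon> q by simp
  have "\<bar>1 / (x powr s + k) - 1 / (x powr s + (k + \<delta>))\<bar> \<le> \<epsilon>" if "x \<in> Ival \<eta>" for x
  proof -
    have "q \<le> x powr s" unfolding q_def using that \<eta> s by (intro powr_mono2) (auto simp: Ival_def)
    then have p: "q \<le> x powr s + k" "q \<le> x powr s + (k + \<delta>)" using k \<delta> by auto
    have "1 / (x powr s + k) - 1 / (x powr s + (k + \<delta>)) = \<delta> / ((x powr s + k) * (x powr s + (k + \<delta>)))"
      using p q by (simp add: field_simps)
    also have "\<bar>\<dots>\<bar> \<le> \<delta> / (q * q)"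
      using p q \<delta> by (simp add: frac_le mult_mono)
    finally show ?thesis using q by (simp add: \<delta>_def power2_eq_square)
  qed
  then show "\<exists>g. dict_approx \<eta> ((1 / ((1-s) * \<eta>) + 2 / s) / (pi * sin (s * pi))) g \<and>
      (\<forall>x\<in>Ival \<eta>. \<bar>1 / (x powr s + k) - g x\<bar> \<le> \<epsilon>)"
    using dict_approx_inv_powr_plus_pos[OF \<eta> s, of "k + \<delta>"] k \<delta> by auto
qed

theorem corollary4p2:
  fixes \<eta> s k :: real
  assumes "0 < \<eta>" "\<eta> < 1" "0 < s" "s < 1" "0 \<le> k"
  shows "(\<lambda>x. 1 / (x powr s + k)) \<in> L1space \<eta>"
proof (rule L1space_if_dict_approx)
  show "dict_approx \<eta> ((1 / ((1-s) * \<eta>) + 2 / s) / (pi * sin (s * pi))) (\<lambda>x. 1 / (x powr s + k))"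
    using dict_approx_inv_powr_plus assms by blast
  show "0 < (1 / ((1-s) * \<eta>) + 2 / s) / (pi * sin (s * pi))"
    using assms sin_pi_mult_pos[of s] by (simp add: add_pos_pos)
qed

end
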